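(* Let $(x_k)_{k\ge0}$ be indeterminates, define $a_n=x_n$ if $n=2^k-1$ for some integer $k\ge0$ and $a_n=0$ otherwise, let $D(n)=\det\left(a_{i+j+1}\right)_{i,j=0}^{n-1}$ with $D(0)=1$, and let $T_n=\frac{D(n)D(n+2)}{D(n+1)^2}$ (in the field of rational functions). Then for all $n\ge0$, $$T_{2n+1}=-T_{2n},\qquad T_{4n}=(-1)^n\frac{x_3}{x_1},$$ and for all $k\ge2$ and $n\ge0$, $$T_{2^{k+1}n+2^k-1}=(-1)^n\frac{x_1x_{2^{k+1}-1}}{x_{2^k-1}^2}.$$ *)

theory Defs
  imports "HOL-Library.Poly_Mapping" "HOL-Computational_Algebra.Fraction_Field"
    "Jordan_Normal_Form.Determinant"
begin

text \<open>Multivariate polynomials over the integers in the indeterminates x_0, x_1, ...: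
  monomials are finitely supported exponent vectors nat \<Rightarrow>0 nat.\<close>
type_synonym mpoly = "(nat \<Rightarrow>\<^sub>0 nat) \<Rightarrow>\<^sub>0 int"
type_synonym ratfun = "mpoly fract"

definition X :: "nat \<Rightarrow> ratfun" where
  "X k = Fract (Poly_Mapping.single (Poly_Mapping.single k 1) 1) 1"

definition seq_a :: "nat \<Rightarrow> ratfun" where
  "seq_a n = (if \<exists>k::nat. n = 2 ^ k - 1 then X n else 0)"

definition hankelD :: "nat \<Rightarrow> ratfun" where
  "hankelD n = det (mat n n (\<lambda>(i, j). seq_a (i + j + 1)))"

definition T :: "nat \<Rightarrow> ratfun" where
  "T n = hankelD n * hankelD (n + 2) / (hankelD (n + 1))^2"

end

theory Submission
  imports Defs
begin

text \<open>Write a for the lacunary sequence, H0 n = det (a (i + j)) and H1 n = det (a (i + j + 1)),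
  and H0', H1' for the same determinants built from the sequence j \<mapsto> x (2 j + 1).
  Listing the even indices before the odd ones turns both Hankel matrices into block matrices
  whose blocks are again such Hankel matrices, because a vanishes at all even positive indices:
  H1 n = H0' (ceil (n/2)) * H1' (floor (n/2)), H0 (2t) = (-1)^t (H0' t)^2 and
  H0 (2t+1) = (-1)^t x 0 (H1' t)^2. Consequently T (2n) = (-1)^n x 1 R' n and T (2n+1) = - T (2n),
  where R n = H1 n H1 (n+1) / H0 (n+1)^2 obeys R (2n) = (-1)^n x 1 / x 0 ^ 2 and R (2n+1) = R' n.
  Peeling off trailing binary ones of the index with the last rule gives the closed forms.\<close>

lemma det_mat_reindex:
  fixes f :: "nat \<Rightarrow> nat \<Rightarrow> 'a :: comm_ring_1"
  assumes p: "p permutes {0..<n}"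
  shows "det (mat n n (\<lambda>(i,j). f (p i) (p j))) = det (mat n n (\<lambda>(i,j). f i j))"
proof -
  have pin: "\<And>i. i < n \<Longrightarrow> p i < n" using permutes_in_image[OF p] by auto
  let ?B = "mat n n (\<lambda>(i,j). f i (p j))"
  let ?C = "mat n n (\<lambda>(i,j). f j i)"
  have rows: "det (mat n n (\<lambda>(i,j). f (p i) (p j))) = signof p * det ?B"
  proof -
    have "mat n n (\<lambda>(i,j). f (p i) (p j)) = mat n n (\<lambda>(i,j). ?B $$ (p i, j))"
      by (rule eq_matI) (auto simp: pin)
    then show ?thesis by (simp add: det_permute_rows[OF _ p])
  qed
  have cols: "det ?B = signof p * det ?C"
  proof -
    have "transpose_mat ?B = mat n n (\<lambda>(i,j). ?C $$ (p i, j))"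
      by (rule eq_matI) (auto simp: pin)
    moreover have "det (transpose_mat ?B) = det ?B" by (rule det_transpose) auto
    ultimately show ?thesis by (simp add: det_permute_rows[OF _ p])
  qed
  have "det ?C = det (mat n n (\<lambda>(i,j). f i j))"
  proof -
    have "transpose_mat ?C = mat n n (\<lambda>(i,j). f i j)" by (rule eq_matI) auto
    moreover have "det (transpose_mat ?C) = det ?C" by (rule det_transpose) auto
    ultimately show ?thesis by simp
  qed
  then show ?thesis
    using rows cols by (simp add: mult.assoc[symmetric] of_int_mult[symmetric])
qed

lemma permutes_meets_initial_segments:
  fixes n :: nat
  assumes p: "p permutes {0..<n}" and "a \<le> n" and "b \<le> n" and "n < a + b"
  shows "\<exists>i<a. p i < b"
proof (rule ccontr)
  assume none: "\<not> ?thesis"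
  have "p ` {0..<a} \<subseteq> {b..<n}"
  proof (intro image_subsetI)
    fix i assume "i \<in> {0..<a}"
    then have "i < n" "\<not> p i < b" using none \<open>a \<le> n\<close> by simp_all
    then show "p i \<in> {b..<n}" using permutes_in_image[OF p, of i] by auto
  qed
  moreover have "inj_on p {0..<a}"
    using permutes_inj[OF p] by (auto intro: inj_on_subset)
  ultimately have "card {0..<a} \<le> card {b..<n}"
    by (metis card_image card_mono finite_atLeastLessThan)
  then show False using assms by simp
qed

text \<open>Every permutation moving 0 meets the zero block, by pigeonhole.\<close>
lemma det_isolated_corner:
  fixes M :: "'a :: idom mat"
  assumes M: "M \<in> carrier_mat (Suc n) (Suc n)" and "m \<le> Suc n" and "Suc n < 2 * m"
    and zero: "\<And>i j. i < m \<Longrightarrow> j < m \<Longrightarrow> (i, j) \<noteq> (0, 0) \<Longrightarrow> M $$ (i, j) = 0"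
  shows "det M = M $$ (0, 0) * det (mat_delete M 0 0)"
proof -
  let ?M1 = "mat (Suc n) (Suc n) (\<lambda>(i,j). if i = 0 \<and> j \<noteq> 0 then 0 else M $$ (i, j))"
  have "det M = det ?M1"
    unfolding det_def'[OF M] det_def'[of ?M1 "Suc n", OF mat_carrier]
  proof (intro sum.cong refl)
    fix p assume "p \<in> {p. p permutes {0..<Suc n}}"
    then have p: "p permutes {0..<Suc n}" by simp
    have pin: "\<And>i. i < Suc n \<Longrightarrow> p i < Suc n" using permutes_in_image[OF p] by auto
    show "signof p * (\<Prod>i = 0..<Suc n. M $$ (i, p i)) = signof p * (\<Prod>i = 0..<Suc n. ?M1 $$ (i, p i))"
    proof (cases "p 0 = 0")
      case True
      then show ?thesis using pin by (auto intro!: prod.cong)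
    next
      case False
      obtain i where i: "i < m" "p i < m"
        using permutes_meets_initial_segments[OF p \<open>m \<le> Suc n\<close> \<open>m \<le> Suc n\<close>] \<open>Suc n < 2 * m\<close> by auto
      have "M $$ (i, p i) = 0" using zero[OF i] False by (cases "i = 0") auto
      then have "(\<Prod>i = 0..<Suc n. M $$ (i, p i)) = 0"
        using i \<open>m \<le> Suc n\<close> by (intro prod_zero[OF _ bexI[of _ i]]) auto
      moreover have "(\<Prod>i = 0..<Suc n. ?M1 $$ (i, p i)) = 0"
        using False pin[of 0] by (intro prod_zero[OF _ bexI[of _ 0]]) auto
      ultimately show ?thesis by (simp only: mult_zero_right)
    qed
  qed
  also have "?M1 = four_block_mat (mat 1 1 (\<lambda>_. M $$ (0, 0))) (0\<^sub>m 1 n)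
      (mat n 1 (\<lambda>(i, _). M $$ (Suc i, 0))) (mat_delete M 0 0)"
    using M by (intro eq_matI) (auto simp: mat_delete_def)
  also have "det \<dots> = M $$ (0, 0) * det (mat_delete M 0 0)"
    using M by (subst det_four_block_mat_upper_right_zero) (auto simp: det_single mat_delete_carrier)
  finally show ?thesis .
qed

lemma det_four_block_lower_right_zero:
  fixes A :: "'a :: idom mat"
  assumes A: "A \<in> carrier_mat t t" and B: "B \<in> carrier_mat t t" and C: "C \<in> carrier_mat t t"
  shows "det (four_block_mat A B C (0\<^sub>m t t)) = (-1)^t * det B * det C"
proof -
  have "det (four_block_mat A B C (0\<^sub>m t t)) = det (A * 0\<^sub>m t t - B * C)"
    using A B C by (intro det_four_block_mat) auto
  also have "A * 0\<^sub>m t t - B * C = (-1) \<cdot>\<^sub>m (B * C)"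
    using A B C by (intro eq_matI) auto
  finally show ?thesis using B C by (simp add: det_mult[OF B C])
qed


subsection \<open>Hankel determinants\<close>

definition hankel_det :: "(nat \<Rightarrow> 'a :: comm_ring_1) \<Rightarrow> nat \<Rightarrow> 'a" where
  "hankel_det h n = det (mat n n (\<lambda>(i, j). h (i + j)))"

definition evens_first :: "nat \<Rightarrow> nat \<Rightarrow> nat" where
  "evens_first n i =
     (if i < (n + 1) div 2 then 2 * i else if i < n then 2 * (i - (n + 1) div 2) + 1 else i)"

lemma evens_first_permutes: "evens_first n permutes {0..<n}"
proof (rule bij_imp_permutes)
  have inj: "inj_on (evens_first n) {0..<n}"
    unfolding inj_on_def evens_first_def by (auto; presburger)
  have "evens_first n ` {0..<n} \<subseteq> {0..<n}"
    unfolding evens_first_def by (auto; presburger)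
  then show "bij_betw (evens_first n) {0..<n} {0..<n}"
    using inj endo_inj_surj[OF _ _ inj] by (simp add: bij_betw_def)
  show "\<And>i. i \<notin> {0..<n} \<Longrightarrow> evens_first n i = i" unfolding evens_first_def by auto
qed

lemma hankel_det_even_odd_blocks:
  fixes h :: "nat \<Rightarrow> 'a :: comm_ring_1" and n :: nat
  defines "p \<equiv> (n + 1) div 2" and "q \<equiv> n div 2"
  shows "hankel_det h n = det (four_block_mat
      (mat p p (\<lambda>(i, j). h (2 * (i + j)))) (mat p q (\<lambda>(i, j). h (2 * (i + j) + 1)))
      (mat q p (\<lambda>(i, j). h (2 * (i + j) + 1))) (mat q q (\<lambda>(i, j). h (2 * (i + j) + 2))))"
proof -
  have n: "n = p + q" unfolding p_def q_def by simp
  have upper: "i - p < q" if "i < n" "\<not> i < p" for i using that n by simp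
  have index: "evens_first n i + evens_first n j =
      (if i < p then if j < p then 2 * (i + j) else 2 * (i + (j - p)) + 1
       else if j < p then 2 * ((i - p) + j) + 1 else 2 * ((i - p) + (j - p)) + 2)"
    if "i < n" "j < n" for i j
    using that by (auto simp: evens_first_def p_def)
  have "hankel_det h n = det (mat n n (\<lambda>(i, j). h (evens_first n i + evens_first n j)))"
    unfolding hankel_det_def by (rule det_mat_reindex[OF evens_first_permutes, symmetric])
  also have "mat n n (\<lambda>(i, j). h (evens_first n i + evens_first n j)) = four_block_mat
      (mat p p (\<lambda>(i, j). h (2 * (i + j)))) (mat p q (\<lambda>(i, j). h (2 * (i + j) + 1)))
      (mat q p (\<lambda>(i, j). h (2 * (i + j) + 1))) (mat q q (\<lambda>(i, j). h (2 * (i + j) + 2)))"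
    by (rule eq_matI) (auto simp: index n[symmetric] upper intro!: arg_cong[where f = h])
  finally show ?thesis .
qed

subsection \<open>The lacunary sequence\<close>

definition lacunary :: "(nat \<Rightarrow> 'a :: zero) \<Rightarrow> nat \<Rightarrow> 'a" where
  "lacunary x n = (if \<exists>k::nat. n = 2 ^ k - 1 then x n else 0)"

definition odd_part :: "(nat \<Rightarrow> 'a) \<Rightarrow> nat \<Rightarrow> 'a" where
  "odd_part x j = x (2 * j + 1)"

lemma Suc_double_eq_pow2_minus1_iff:
  fixes n :: nat
  shows "(\<exists>k::nat. 2 * n + 1 = 2 ^ k - 1) \<longleftrightarrow> (\<exists>k::nat. n = 2 ^ k - 1)"
proof -
  have step: "2 * n + 1 = 2 ^ Suc k - 1 \<longleftrightarrow> n = 2 ^ k - 1" for k :: nat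
  proof -
    have "(1::nat) \<le> 2 ^ k" by simp
    then show ?thesis by (simp only: power_Suc) arith
  qed
  show ?thesis
  proof
    assume "\<exists>k::nat. 2 * n + 1 = 2 ^ k - 1"
    then obtain k :: nat where k: "2 * n + 1 = 2 ^ k - 1" by blast
    then obtain k' where "k = Suc k'" by (cases k) auto
    then show "\<exists>k::nat. n = 2 ^ k - 1" using k step by blast
  qed (use step in blast)
qed

lemma lacunary_odd: "odd m \<Longrightarrow> lacunary x m = lacunary (odd_part x) (m div 2)"
proof -
  assume "odd m"
  then obtain n where m: "m = 2 * n + 1" by (rule oddE)
  show ?thesis
    unfolding lacunary_def odd_part_def m Suc_double_eq_pow2_minus1_iff by simp
qed

lemma lacunary_even: "even m \<Longrightarrow> lacunary x m = (if m = 0 then x 0 else 0)"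
proof -
  assume "even m"
  have "\<not> (\<exists>k::nat. m = 2 ^ k - 1)" if "m \<noteq> 0"
  proof
    assume "\<exists>k::nat. m = 2 ^ k - 1"
    then obtain k :: nat where k: "m = 2 ^ k - 1" by blast
    with \<open>m \<noteq> 0\<close> obtain k' where "k = Suc k'" by (cases k) auto
    with k \<open>even m\<close> show False using one_le_power[of 2 k'] by simp
  qed
  moreover have "\<exists>k::nat. (0::nat) = 2 ^ k - 1" by (rule exI[of _ 0]) simp
  ultimately show ?thesis by (auto simp: lacunary_def)
qed

definition hankel0 :: "(nat \<Rightarrow> 'a :: comm_ring_1) \<Rightarrow> nat \<Rightarrow> 'a" where
  "hankel0 x n = hankel_det (lacunary x) n"

definition hankel1 :: "(nat \<Rightarrow> 'a :: comm_ring_1) \<Rightarrow> nat \<Rightarrow> 'a" where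
  "hankel1 x n = hankel_det (\<lambda>k. lacunary x (k + 1)) n"

lemma hankel1_split:
  fixes x :: "nat \<Rightarrow> 'a :: idom"
  shows "hankel1 x n = hankel0 (odd_part x) ((n + 1) div 2) * hankel1 (odd_part x) (n div 2)"
proof -
  let ?p = "(n + 1) div 2" and ?q = "n div 2"
  have "hankel1 x n = det (four_block_mat
      (mat ?p ?p (\<lambda>(i, j). lacunary (odd_part x) (i + j))) (0\<^sub>m ?p ?q)
      (0\<^sub>m ?q ?p) (mat ?q ?q (\<lambda>(i, j). lacunary (odd_part x) (i + j + 1))))"
    unfolding hankel1_def hankel_det_even_odd_blocks
    by (intro arg_cong[where f = det] arg_cong4[where f = four_block_mat] eq_matI)
      (auto simp: lacunary_odd lacunary_even)
  also have "\<dots> = hankel0 (odd_part x) ?p * hankel1 (odd_part x) ?q"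
    unfolding hankel0_def hankel1_def hankel_det_def
    by (intro det_four_block_mat_upper_right_zero) auto
  finally show ?thesis .
qed

lemma hankel0_double:
  fixes x :: "nat \<Rightarrow> 'a :: idom"
  shows "hankel0 x (2 * t) = (-1) ^ t * (hankel0 (odd_part x) t)\<^sup>2"
proof -
  let ?H = "mat t t (\<lambda>(i, j). lacunary (odd_part x) (i + j))"
  have "hankel0 x (2 * t) = det (four_block_mat
      (mat t t (\<lambda>(i, j). lacunary x (2 * (i + j)))) ?H ?H (0\<^sub>m t t))"
    unfolding hankel0_def hankel_det_even_odd_blocks
    by (intro arg_cong[where f = det] arg_cong4[where f = four_block_mat] eq_matI)
      (auto simp: lacunary_odd lacunary_even)
  also have "\<dots> = (-1) ^ t * det ?H * det ?H"
    by (rule det_four_block_lower_right_zero) auto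
  finally show ?thesis by (simp add: hankel0_def hankel_det_def power2_eq_square)
qed

lemma hankel0_Suc_double:
  fixes x :: "nat \<Rightarrow> 'a :: idom"
  shows "hankel0 x (2 * t + 1) = (-1) ^ t * x 0 * (hankel1 (odd_part x) t)\<^sup>2"
proof -
  let ?M = "four_block_mat (mat (t + 1) (t + 1) (\<lambda>(i, j). lacunary x (2 * (i + j))))
      (mat (t + 1) t (\<lambda>(i, j). lacunary (odd_part x) (i + j)))
      (mat t (t + 1) (\<lambda>(i, j). lacunary (odd_part x) (i + j))) (0\<^sub>m t t)"
  let ?H = "mat t t (\<lambda>(i, j). lacunary (odd_part x) (i + j + 1))"
  have "hankel0 x (2 * t + 1) = det ?M"
    unfolding hankel0_def hankel_det_even_odd_blocks
    by (intro arg_cong[where f = det] arg_cong4[where f = four_block_mat] eq_matI)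
      (auto simp: lacunary_odd lacunary_even)
  also have "\<dots> = ?M $$ (0, 0) * det (mat_delete ?M 0 0)"
    by (rule det_isolated_corner[where m = "t + 1"]) (auto simp: lacunary_even)
  also have "mat_delete ?M 0 0 = four_block_mat (0\<^sub>m t t) ?H ?H (0\<^sub>m t t)"
    by (rule eq_matI) (auto simp: mat_delete_def lacunary_even Suc_diff_le)
  also have "det \<dots> = (-1) ^ t * det ?H * det ?H"
    by (rule det_four_block_lower_right_zero) auto
  finally show ?thesis
    by (simp add: hankel1_def hankel_det_def lacunary_even power2_eq_square)
qed

lemma hankel_det_0 [simp]: "hankel_det h 0 = 1"
  unfolding hankel_det_def by simp

lemma hankel0_consecutive:
  fixes x :: "nat \<Rightarrow> 'a :: idom"
  shows "hankel0 x n * hankel0 x (n + 1) = (-1) ^ n * x 0 * (hankel1 x n)\<^sup>2"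
proof -
  let ?e = "hankel0 (odd_part x)" and ?d = "hankel1 (odd_part x)"
  have sign: "(-1 :: 'a) ^ (2 * t) = (-1) ^ t * (-1) ^ t" for t by (simp add: mult_2 power_add)
  show ?thesis
  proof (cases "even n")
    case True
    then obtain t where n: "n = 2 * t" by blast
    have "hankel0 x n * hankel0 x (n + 1) = (-1) ^ t * (?e t)\<^sup>2 * ((-1) ^ t * x 0 * (?d t)\<^sup>2)"
      unfolding n hankel0_double hankel0_Suc_double ..
    also have "\<dots> = (-1) ^ n * x 0 * (?e t * ?d t)\<^sup>2"
      unfolding n sign by (simp add: power_mult_distrib mult_ac)
    also have "?e t * ?d t = hankel1 x n" unfolding n hankel1_split[of x] by simp
    finally show ?thesis .
  next
    case False
    then obtain t where n: "n = 2 * t + 1" by (blast elim: oddE)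
    then have n1: "n + 1 = 2 * (t + 1)" by simp
    have "hankel0 x n * hankel0 x (n + 1) = (-1) ^ t * x 0 * (?d t)\<^sup>2 * ((-1) ^ (t + 1) * (?e (t + 1))\<^sup>2)"
      unfolding n1 unfolding n hankel0_double hankel0_Suc_double ..
    also have "\<dots> = (-1) ^ n * x 0 * (?e (t + 1) * ?d t)\<^sup>2"
      unfolding n sign by (simp add: power_mult_distrib mult_ac)
    also have "?e (t + 1) * ?d t = hankel1 x n" unfolding n hankel1_split[of x] by simp
    finally show ?thesis .
  qed
qed

lemma odd_part_pow2_minus1: "odd_part x (2 ^ k - 1) = x (2 ^ Suc k - 1)"
proof -
  have "(1::nat) \<le> 2 ^ k" by simp
  then have "2 * (2 ^ k - 1) + 1 = (2 ^ Suc k - 1 :: nat)" by (simp only: power_Suc)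
  then show ?thesis by (simp add: odd_part_def)
qed

lemma odd_part_nonzero: "\<forall>k. x (2 ^ k - 1) \<noteq> 0 \<Longrightarrow> \<forall>k. odd_part x (2 ^ k - 1) \<noteq> 0"
  unfolding odd_part_pow2_minus1 by blast

lemma hankel_nonzero:
  fixes x :: "nat \<Rightarrow> 'a :: idom"
  assumes "\<forall>k. x (2 ^ k - 1) \<noteq> 0"
  shows "hankel0 x n \<noteq> 0 \<and> hankel1 x n \<noteq> 0"
  using assms
proof (induction n arbitrary: x rule: less_induct)
  case (less n)
  have hankel0_nonzero: "hankel0 z m \<noteq> 0" if z: "\<forall>k. z (2 ^ k - 1) \<noteq> 0" and "m \<le> n" for z :: "nat \<Rightarrow> 'a" and m
  proof -
    have IH: "hankel0 (odd_part z) (m div 2) \<noteq> 0" "hankel1 (odd_part z) (m div 2) \<noteq> 0" if "m \<noteq> 0"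
      using less.IH[OF _ odd_part_nonzero[OF z]] that \<open>m \<le> n\<close> by auto
    have "z 0 \<noteq> 0" using spec[OF z, of 0] by simp
    show ?thesis
    proof (cases "even m")
      case True
      show ?thesis
      proof (cases "m = 0")
        case False
        then have "hankel0 z (2 * (m div 2)) \<noteq> 0" unfolding hankel0_double using IH by simp
        then show ?thesis by (metis even_two_times_div_two[OF \<open>even m\<close>])
      qed (simp add: hankel0_def)
    next
      case False
      then have "hankel0 z (2 * (m div 2) + 1) \<noteq> 0"
        unfolding hankel0_Suc_double using IH odd_pos[OF False] \<open>z 0 \<noteq> 0\<close> by simp
      then show ?thesis by (metis odd_two_times_div_two_succ[OF \<open>odd m\<close>])
    qed
  qed
  have "hankel1 x n \<noteq> 0"
  proof (cases "n = 0")
    case False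
    then show ?thesis
      using hankel0_nonzero[OF odd_part_nonzero[OF less.prems], of "(n + 1) div 2"]
        less.IH[OF _ odd_part_nonzero[OF less.prems], of "n div 2"]
      by (simp add: hankel1_split[of x])
  qed (simp add: hankel1_def)
  then show ?case using hankel0_nonzero[OF less.prems] by simp
qed

subsection \<open>The quotients\<close>

definition hankel_ratio :: "(nat \<Rightarrow> 'a :: field) \<Rightarrow> nat \<Rightarrow> 'a" where
  "hankel_ratio x n = hankel1 x n * hankel1 x (n + 1) / (hankel0 x (n + 1))\<^sup>2"

definition hankel_T :: "(nat \<Rightarrow> 'a :: field) \<Rightarrow> nat \<Rightarrow> 'a" where
  "hankel_T x n = hankel1 x n * hankel1 x (n + 2) / (hankel1 x (n + 1))\<^sup>2"

lemma hankel_ratio_double: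
  fixes x :: "nat \<Rightarrow> 'a :: field"
  assumes x: "\<forall>k. x (2 ^ k - 1) \<noteq> 0"
  shows "hankel_ratio x (2 * n) = (-1) ^ n * x 1 / (x 0)\<^sup>2"
proof -
  let ?e = "hankel0 (odd_part x)" and ?d = "hankel1 (odd_part x)"
  have nz: "?e k \<noteq> 0" "?d k \<noteq> 0" for k
    using hankel_nonzero[OF odd_part_nonzero[OF x]] by auto
  have cons: "?e n * ?e (n + 1) = (-1) ^ n * x 1 * (?d n)\<^sup>2"
    using hankel0_consecutive[of "odd_part x" n] by (simp add: odd_part_def)
  have "hankel_ratio x (2 * n) = ?e n * ?d n * (?e (n + 1) * ?d n) / ((-1) ^ n * x 0 * (?d n)\<^sup>2)\<^sup>2"
    unfolding hankel_ratio_def hankel1_split[of x] hankel0_Suc_double by simp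
  also have "\<dots> = ?e n * ?e (n + 1) / ((x 0)\<^sup>2 * (?d n)\<^sup>2)"
    using nz by (simp add: field_simps power2_eq_square power_mult_distrib)
  also have "\<dots> = (-1) ^ n * x 1 / (x 0)\<^sup>2"
    unfolding cons using nz by (simp add: field_simps)
  finally show ?thesis .
qed

lemma hankel_ratio_Suc_double:
  fixes x :: "nat \<Rightarrow> 'a :: field"
  assumes x: "\<forall>k. x (2 ^ k - 1) \<noteq> 0"
  shows "hankel_ratio x (2 * n + 1) = hankel_ratio (odd_part x) n"
proof -
  let ?e = "hankel0 (odd_part x)" and ?d = "hankel1 (odd_part x)"
  have nz: "?e k \<noteq> 0" "?d k \<noteq> 0" for k
    using hankel_nonzero[OF odd_part_nonzero[OF x]] by auto
  have idx: "2 * n + 1 + 1 = 2 * (n + 1)" by simp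
  have "hankel_ratio x (2 * n + 1)
      = ?e (n + 1) * ?d n * (?e (n + 1) * ?d (n + 1)) / ((-1) ^ (n + 1) * (?e (n + 1))\<^sup>2)\<^sup>2"
    unfolding hankel_ratio_def idx hankel1_split[of x] hankel0_double by simp
  also have "\<dots> = hankel_ratio (odd_part x) n"
    unfolding hankel_ratio_def using nz by (simp add: field_simps power2_eq_square power_mult_distrib)
  finally show ?thesis .
qed

lemma funpow_odd_part: "(odd_part ^^ j) x i = x (2 ^ j * (i + 1) - 1)"
proof (induction j arbitrary: i)
  case (Suc j)
  have "(odd_part ^^ Suc j) x i = (odd_part ^^ j) x (2 * i + 1)" by (simp add: odd_part_def)
  also have "\<dots> = x (2 ^ j * (2 * i + 1 + 1) - 1)" by (rule Suc.IH)
  also have "2 ^ j * (2 * i + 1 + 1) = 2 ^ Suc j * (i + 1)" by simp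
  finally show ?case .
qed simp

lemma hankel_ratio_funpow_odd_part:
  fixes x :: "nat \<Rightarrow> 'a :: field"
  assumes "\<forall>k. x (2 ^ k - 1) \<noteq> 0"
  shows "hankel_ratio x (2 ^ j * (m + 1) - 1) = hankel_ratio ((odd_part ^^ j) x) m"
  using assms
proof (induction j arbitrary: x)
  case (Suc j)
  have "0 < 2 ^ j * (m + 1)" "2 ^ Suc j * (m + 1) = 2 * (2 ^ j * (m + 1))" by simp_all
  then have idx: "2 ^ Suc j * (m + 1) - 1 = 2 * (2 ^ j * (m + 1) - 1) + 1" by linarith
  have "hankel_ratio x (2 ^ Suc j * (m + 1) - 1) = hankel_ratio (odd_part x) (2 ^ j * (m + 1) - 1)"
    unfolding idx by (rule hankel_ratio_Suc_double[OF Suc.prems])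
  also have "\<dots> = hankel_ratio ((odd_part ^^ j) (odd_part x)) m"
    by (rule Suc.IH[OF odd_part_nonzero[OF Suc.prems]])
  also have "(odd_part ^^ j) (odd_part x) = (odd_part ^^ Suc j) x"
    by (simp only: funpow_Suc_right o_apply)
  finally show ?case .
qed simp

lemma hankel_T_double:
  fixes x :: "nat \<Rightarrow> 'a :: field"
  assumes x: "\<forall>k. x (2 ^ k - 1) \<noteq> 0"
  shows "hankel_T x (2 * n) = (-1) ^ n * x 1 * hankel_ratio (odd_part x) n"
proof -
  let ?e = "hankel0 (odd_part x)" and ?d = "hankel1 (odd_part x)"
  have nz: "?e k \<noteq> 0" "?d k \<noteq> 0" for k
    using hankel_nonzero[OF odd_part_nonzero[OF x]] by auto
  have cons: "?e n * ?e (n + 1) = (-1) ^ n * x 1 * (?d n)\<^sup>2"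
    using hankel0_consecutive[of "odd_part x" n] by (simp add: odd_part_def)
  have "2 * n + 2 = 2 * (n + 1)" by simp
  then have "hankel_T x (2 * n) = ?e n * ?d n * (?e (n + 1) * ?d (n + 1)) / (?e (n + 1) * ?d n)\<^sup>2"
    unfolding hankel_T_def hankel1_split[of x] by simp
  also have "\<dots> = (?e n * ?e (n + 1)) * ?d (n + 1) / ((?e (n + 1))\<^sup>2 * ?d n)"
    using nz by (simp add: field_simps power2_eq_square)
  also have "\<dots> = (-1) ^ n * x 1 * hankel_ratio (odd_part x) n"
    unfolding cons hankel_ratio_def using nz by (simp add: field_simps power2_eq_square)
  finally show ?thesis .
qed

lemma hankel_T_Suc_double:
  fixes x :: "nat \<Rightarrow> 'a :: field"
  assumes x: "\<forall>k. x (2 ^ k - 1) \<noteq> 0"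
  shows "hankel_T x (2 * n + 1) = - hankel_T x (2 * n)"
proof -
  let ?e = "hankel0 (odd_part x)" and ?d = "hankel1 (odd_part x)"
  have nz: "?e k \<noteq> 0" "?d k \<noteq> 0" for k
    using hankel_nonzero[OF odd_part_nonzero[OF x]] by auto
  have cons: "?e (n + 1) * ?e (n + 2) = - ((-1) ^ n * x 1 * (?d (n + 1))\<^sup>2)"
    using hankel0_consecutive[of "odd_part x" "n + 1"] by (simp add: odd_part_def)
  have "2 * n + 1 + 1 = 2 * (n + 1)" "2 * n + 1 + 2 = 2 * (n + 1) + 1" by simp_all
  then have "hankel_T x (2 * n + 1) = ?e (n + 1) * ?d n * (?e (n + 2) * ?d (n + 1)) / (?e (n + 1) * ?d (n + 1))\<^sup>2"
    unfolding hankel_T_def hankel1_split[of x] by simp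
  also have "\<dots> = (?e (n + 1) * ?e (n + 2)) * ?d n / ((?e (n + 1))\<^sup>2 * ?d (n + 1))"
    using nz by (simp add: field_simps power2_eq_square)
  also have "\<dots> = - ((-1) ^ n * x 1 * hankel_ratio (odd_part x) n)"
    unfolding cons hankel_ratio_def using nz by (simp add: field_simps power2_eq_square)
  finally show ?thesis using hankel_T_double[OF x] by simp
qed

lemma funpow_odd_part_nonzero:
  assumes "\<forall>k. x (2 ^ k - 1) \<noteq> 0"
  shows "\<forall>k. (odd_part ^^ j) x (2 ^ k - 1) \<noteq> 0"
  using assms
proof (induction j)
  case (Suc j)
  then show ?case using odd_part_nonzero[of "(odd_part ^^ j) x"] by simp
qed simp

lemma hankel_T_mult4:
  fixes x :: "nat \<Rightarrow> 'a :: field"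
  assumes x: "\<forall>k. x (2 ^ k - 1) \<noteq> 0"
  shows "hankel_T x (4 * n) = (-1) ^ n * x 3 / x 1"
proof -
  have "x 1 \<noteq> 0" using spec[OF x, of 1] by simp
  have "hankel_T x (4 * n) = (-1) ^ (2 * n) * x 1 * hankel_ratio (odd_part x) (2 * n)"
    using hankel_T_double[OF x, of "2 * n"] by simp
  also have "\<dots> = x 1 * ((-1) ^ n * x 3 / (x 1)\<^sup>2)"
    by (simp add: hankel_ratio_double[OF odd_part_nonzero[OF x]] odd_part_def)
  also have "\<dots> = (-1) ^ n * x 3 / x 1"
    using \<open>x 1 \<noteq> 0\<close> by (simp add: power2_eq_square)
  finally show ?thesis .
qed

lemma hankel_T_pow2:
  fixes x :: "nat \<Rightarrow> 'a :: field"
  assumes x: "\<forall>k. x (2 ^ k - 1) \<noteq> 0" and "2 \<le> k"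
  shows "hankel_T x (2 ^ (k + 1) * n + 2 ^ k - 1)
    = (-1) ^ n * x 1 * x (2 ^ (k + 1) - 1) / (x (2 ^ k - 1))\<^sup>2"
proof -
  obtain j where k: "k = Suc j" and "1 \<le> j" using \<open>2 \<le> k\<close> by (cases k) auto
  define m where "m = 2 ^ j * (2 * n + 1) - 1"
  have even_prod: "even (2 ^ j * (2 * n + 1))" and pos: "0 < 2 ^ j * (2 * n + 1)"
    using \<open>1 \<le> j\<close> by simp_all
  then have m1: "m + 1 = 2 ^ j * (2 * n + 1)" unfolding m_def by simp
  have "even (m + 1)" unfolding m1 by (rule even_prod)
  then have "odd m" by simp
  have "2 ^ (k + 1) * n + 2 ^ k = 2 * (m + 1)" unfolding m1 k by (simp add: algebra_simps)
  then have idx: "2 ^ (k + 1) * n + 2 ^ k - 1 = 2 * m + 1" by simp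
  let ?z = "(odd_part ^^ k) x"
  have "hankel_T x (2 * m + 1) = x 1 * hankel_ratio (odd_part x) m"
    using hankel_T_Suc_double[OF x] hankel_T_double[OF x] \<open>odd m\<close> by simp
  also have "hankel_ratio (odd_part x) m = hankel_ratio ?z (2 * n)"
    unfolding m_def hankel_ratio_funpow_odd_part[OF odd_part_nonzero[OF x]]
    by (simp only: k funpow_Suc_right o_apply)
  also have "\<dots> = (-1) ^ n * ?z 1 / (?z 0)\<^sup>2"
    by (rule hankel_ratio_double[OF funpow_odd_part_nonzero[OF x]])
  finally show ?thesis unfolding idx funpow_odd_part by (simp add: mult.commute mult_2)
qed

lemma X_nonzero: "X k \<noteq> 0"
proof
  assume "X k = 0"
  then have "(Poly_Mapping.single (Poly_Mapping.single k 1) 1 :: mpoly) = 0"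
    unfolding X_def Zero_fract_def by (simp add: eq_fract)
  then have "Poly_Mapping.lookup (Poly_Mapping.single (Poly_Mapping.single k 1) 1 :: mpoly)
      (Poly_Mapping.single k 1) = 0"
    by simp
  then show False by simp
qed

lemma T_eq_hankel_T: "T = hankel_T X"
proof -
  have "seq_a = lacunary X" unfolding seq_a_def lacunary_def by auto
  then have "hankelD = hankel1 X" unfolding hankelD_def hankel1_def hankel_det_def by auto
  then show ?thesis unfolding T_def hankel_T_def by auto
qed

theorem theorem5p7:
  shows "(\<forall>n. T (2 * n + 1) = - T (2 * n))
       \<and> (\<forall>n. T (4 * n) = (-1) ^ n * X 3 / X 1)
       \<and> (\<forall>k n. k \<ge> 2 \<longrightarrow>
            T (2 ^ (k + 1) * n + 2 ^ k - 1)
              = (-1) ^ n * X 1 * X (2 ^ (k + 1) - 1) / (X (2 ^ k - 1))^2)"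
proof -
  have X: "\<forall>k. X (2 ^ k - 1) \<noteq> 0" using X_nonzero by blast
  show ?thesis
    unfolding T_eq_hankel_T
    using hankel_T_Suc_double[OF X] hankel_T_mult4[OF X] hankel_T_pow2[OF X] by blast
qed

end
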